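(* Let $q$ be a prime number and $l$ a positive integer. Then $\dfrac{-1}{q^{s-1}}\in\mathbb{Q}\text{-}\mathcal{KS}(q^{l})$ for every positive integer $s$ dividing $l-1$ such that $\dfrac{l-1}{s}$ is even.
   Context: Every nonzero rational $\alpha$ is written $\alpha=\alpha_1/\alpha_2$ with $\alpha_1\in\mathbb{Z}$, $\alpha_2$ a positive integer and $\gcd(\alpha_1,\alpha_2)=1$. For an integer $N\ge 2$ and a nonzero rational $\alpha=\alpha_1/\alpha_2$, $N$ is called an $\alpha$-Korselt number if $N\neq\alpha$ and $\alpha_2p-\alpha_1$ divides $\alpha_2N-\alpha_1$ (in $\mathbb{Z}$) for every prime divisor $p$ of $N$. $\mathbb{Q}\text{-}\mathcal{KS}(N)$ is the set of all $\beta\in\mathbb{Q}\setminus\{0,N\}$ such that $N$ is a $\beta$-Korselt number. *)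

theory Defs
  imports Complex_Main "HOL-Computational_Algebra.Primes"
begin

text \<open>For a nonzero rational alpha = alpha1/alpha2 in lowest terms (alpha2 > 0),
  N \<ge> 2 is an alpha-Korselt number if N \<noteq> alpha and alpha2*p - alpha1 divides
  alpha2*N - alpha1 for every prime divisor p of N.  quotient_of gives exactly
  the normalized pair (alpha1, alpha2).\<close>

definition alpha_korselt :: "nat \<Rightarrow> rat \<Rightarrow> bool" where
  "alpha_korselt N \<alpha> \<longleftrightarrow>
     N \<ge> 2 \<and> \<alpha> \<noteq> 0 \<and> \<alpha> \<noteq> of_nat N \<and>
     (let (a1, a2) = quotient_of \<alpha> in
        \<forall>p::nat. prime p \<and> p dvd N \<longrightarrow> (a2 * int p - a1) dvd (a2 * int N - a1))"

definition Q_KS :: "nat \<Rightarrow> rat set" where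
  "Q_KS N = {\<beta>. \<beta> \<noteq> 0 \<and> \<beta> \<noteq> of_nat N \<and> alpha_korselt N \<beta>}"

end

theory Submission
  imports Defs
begin

text \<open>With m = q^(s-1) the normalized form of alpha is (-1, m), and q is the only prime divisor
  of q^l, so the Korselt condition reads q^s + 1 dvd q^(s-1+l) + 1. As l - 1 = 2ks, the exponent
  s - 1 + l is (2k+1)s, and x + 1 divides x^n + 1 for odd n.\<close>

lemma quotient_of_minus_one_div_nat:
  assumes "m > 0"
  shows "quotient_of (- 1 / rat_of_nat m) = (- 1, int m)"
proof -
  have "- 1 / rat_of_nat m = Fract (- 1) (int m)"
    by (simp add: Fract_of_int_quotient)
  then show ?thesis
    using assms by (simp add: quotient_of_Fract)
qed

lemma add_one_dvd_odd_power_add_one: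
  fixes x :: "'a :: comm_ring_1"
  assumes "odd n"
  shows "(x + 1) dvd (x ^ n + 1)"
proof -
  have "x ^ n - (- 1) ^ n = (x - - 1) * (\<Sum>i<n. (- 1) ^ (n - Suc i) * x ^ i)"
    by (rule power_diff_sumr2)
  moreover have "(- 1 :: 'a) ^ n = - 1"
    using assms by simp
  ultimately have "x ^ n + 1 = (x + 1) * (\<Sum>i<n. (- 1) ^ (n - Suc i) * x ^ i)"
    by simp
  then show ?thesis ..
qed

lemma alpha_korselt_prime_power_iff:
  assumes "prime q" and "l > 0" and "\<alpha> \<noteq> 0" and "\<alpha> \<noteq> of_nat (q ^ l)"
    and "quotient_of \<alpha> = (a1, a2)"
  shows "alpha_korselt (q ^ l) \<alpha> \<longleftrightarrow> (a2 * int q - a1) dvd (a2 * int (q ^ l) - a1)"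
proof -
  have "q ^ l \<ge> q"
    using assms(1,2) prime_gt_0_nat[OF assms(1)] by (simp add: self_le_power)
  then have "q ^ l \<ge> 2"
    using prime_ge_2_nat[OF assms(1)] by linarith
  moreover have "prime p \<and> p dvd q ^ l \<longleftrightarrow> p = q" for p :: nat
  proof
    assume "prime p \<and> p dvd q ^ l"
    then show "p = q"
      using assms(1) by (metis prime_dvd_power primes_dvd_imp_eq)
  qed (use assms(1,2) in \<open>simp add: dvd_power\<close>)
  ultimately show ?thesis
    using assms(3-5) unfolding alpha_korselt_def by simp
qed

theorem proposition5p2:
  fixes q l s :: nat
  assumes "prime q" and "l > 0" and "s > 0" and "s dvd (l - 1)" and "even ((l - 1) div s)"
  shows "(- 1 / (of_nat q) ^ (s - 1) :: rat) \<in> Q_KS (q ^ l)"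
proof -
  define m where "m = q ^ (s - 1)"
  have "m > 0"
    using assms(1) prime_gt_0_nat by (simp add: m_def)
  have \<alpha>: "(- 1 / (of_nat q) ^ (s - 1) :: rat) = - 1 / rat_of_nat m"
    by (simp add: m_def)
  have neg: "- 1 / rat_of_nat m < 0"
    using \<open>m > 0\<close> by simp
  obtain j where "l - 1 = s * j"
    using assms(4) ..
  moreover obtain k where "j = 2 * k"
    using assms(3,5) \<open>l - 1 = s * j\<close> by (auto elim: evenE)
  ultimately have "l - 1 = s * (2 * k)"
    by simp
  then have "s - 1 + l = s * (2 * k + 1)"
    using assms(2,3) by (simp add: algebra_simps)
  then have "int m * int (q ^ l) = (int q ^ s) ^ (2 * k + 1)"
    unfolding m_def by (simp add: power_add [symmetric] power_mult [symmetric])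
  moreover have "int m * int q = int q ^ s"
    unfolding m_def using power_minus_mult[OF assms(3), of "int q"] by simp
  ultimately have "(int m * int q - (- 1)) dvd (int m * int (q ^ l) - (- 1))"
    using add_one_dvd_odd_power_add_one[of "2 * k + 1" "int q ^ s"] by simp
  moreover have "- 1 / rat_of_nat m \<noteq> of_nat (q ^ l)"
    using neg by (metis of_nat_0_le_iff not_le)
  ultimately have "alpha_korselt (q ^ l) (- 1 / rat_of_nat m)"
    using neg alpha_korselt_prime_power_iff[OF assms(1,2) _ _ quotient_of_minus_one_div_nat[OF \<open>m > 0\<close>]]
    by (metis less_irrefl)
  with neg \<open>- 1 / rat_of_nat m \<noteq> of_nat (q ^ l)\<close> show ?thesis
    unfolding \<alpha> Q_KS_def by simp
qed

end
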